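(* Let $F$ be an indexed group with degree map $\deg: F\to\mathbb{Z}$, let $G$ be a group, let $H$ be a subgroup of $G$, and let $\Phi$ be a set of homomorphisms $F\to G$ with the following two properties. (I) $\Phi$ is invariant under conjugation by elements of $H$: if $h\in H$ and $\varphi\in\Phi$, then the homomorphism $\psi: f\mapsto h^{-1}\varphi(f)h$ lies in $\Phi$. (II) For any $\varphi\in\Phi$ and any $h$ in the $\varphi$-core $H_\varphi$ of $H$, the homomorphism $\psi: F\to G$ defined by $\psi(f)=\varphi(f)$ for all $f\in F$ with $\deg f=0$ and $\psi(f_1)=\varphi(f_1)h$ for some element $f_1\in F$ of degree one (equivalently, for all degree-one elements) belongs to $\Phi$. Then $|\Phi|$ is divisible by $|H|$.
   Context: An indexed group is a group $F$ equipped with a surjective homomorphism $\deg: F\to\mathbb{Z}$ (the degree). For $x,y$ in a group, $x^y=y^{-1}xy$, and for a subgroup $H$, $H^y=y^{-1}Hy$; $C(X)$ denotes the centraliser of a subset $X$. For a homomorphism $\varphi: F\to G$ from an indexed group and a subgroup $H\le G$, the $\varphi$-core of $H$ is $H_\varphi=\bigcap_{f\in F}H^{\varphi(f)}\cap C(\{\varphi(f)\mid \deg f=0\})$, i.e. the set of $h$ with $\varphi(f)h\varphi(f)^{-1}\in H$ for all $f\in F$... more precisely $h\in H^{\varphi(f)}$ for all $f$ and $h$ commuting with $\varphi(f)$ whenever $\deg f=0$. (For $h\in H_\varphi$ the map $\psi$ in (II) is a well-defined homomorphism.) Groups need not be finite; divisibility is understood in the sense of cardinal arithmetic: an infinite cardinal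 is divisible by every nonzero cardinal not exceeding it. *)

theory Defs
  imports "HOL-Algebra.Group" "HOL-Library.Equipollence"
begin

text \<open>Cardinal divisibility: |A| divides |B| iff |B| = |A| * |C| for some cardinal,
  i.e. B is equipotent to A \<times> C for some set C (wlog |C| \<le> |B|, so C may be
  taken of the element type of B).\<close>
definition card_dvd :: "'a set \<Rightarrow> 'b set \<Rightarrow> bool" where
  "card_dvd A B \<longleftrightarrow> (\<exists>C :: 'b set. B \<approx> A \<times> C)"

definition homs :: "('f,'m) monoid_scheme \<Rightarrow> ('g,'n) monoid_scheme \<Rightarrow> ('f \<Rightarrow> 'g) set" where
  "homs F G = hom F G \<inter> extensional (carrier F)"

definition indexed_group :: "('f,'m) monoid_scheme \<Rightarrow> ('f \<Rightarrow> int) \<Rightarrow> bool" where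
  "indexed_group F deg \<longleftrightarrow> group F \<and>
     (\<forall>x\<in>carrier F. \<forall>y\<in>carrier F. deg (x \<otimes>\<^bsub>F\<^esub> y) = deg x + deg y) \<and>
     deg ` carrier F = UNIV"

definition conj_set :: "('g,'n) monoid_scheme \<Rightarrow> 'g set \<Rightarrow> 'g \<Rightarrow> 'g set" where
  "conj_set G H y = (\<lambda>x. inv\<^bsub>G\<^esub> y \<otimes>\<^bsub>G\<^esub> x \<otimes>\<^bsub>G\<^esub> y) ` H"

definition phi_core :: "('f,'m) monoid_scheme \<Rightarrow> ('f \<Rightarrow> int) \<Rightarrow> ('g,'n) monoid_scheme
    \<Rightarrow> ('f \<Rightarrow> 'g) \<Rightarrow> 'g set \<Rightarrow> 'g set" where
  "phi_core F deg G \<phi> H =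
     {h \<in> carrier G. (\<forall>f\<in>carrier F. h \<in> conj_set G H (\<phi> f)) \<and>
        (\<forall>f\<in>carrier F. deg f = 0 \<longrightarrow> h \<otimes>\<^bsub>G\<^esub> \<phi> f = \<phi> f \<otimes>\<^bsub>G\<^esub> h)}"

end

theory Submission
  imports Defs "HOL-Algebra.Coset"
begin

text \<open>
  Fix t of degree one. A homomorphism F \<rightarrow> G is determined by its values in degree zero
  and at t, so for c in the \<phi>-core there is a unique homomorphism, the twist of \<phi> by c,
  that agrees with \<phi> in degree zero and sends t to \<phi>(t) c. By (II) the twist lies in \<Phi>,
  and by (I) so do its conjugates by elements of H; these form the orbit of \<phi>, and the
  orbits partition \<Phi>. Each orbit is in bijection with H: write h = c r with r a fixed
  representative of the coset of h modulo the \<phi>-core, and send h to the twist of \<phi> by c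
  conjugated by r. This is onto because conjugating by a core element is itself a twist,
  and one-to-one because a conjugation by an element of H that is undone by a twist
  forces that element into the core. Hence \<Phi> \<approx> H \<times> (orbit representatives).
\<close>

lemma card_dvd_if_partition:
  fixes A :: "'a set" and B :: "'b set" and P :: "'a \<Rightarrow> 'a set"
  assumes mem: "\<And>x. x \<in> A \<Longrightarrow> x \<in> P x"
    and closed: "\<And>x. x \<in> A \<Longrightarrow> P x \<subseteq> A"
    and block_eq: "\<And>x y. x \<in> A \<Longrightarrow> y \<in> P x \<Longrightarrow> P y = P x"
    and size: "\<And>x. x \<in> A \<Longrightarrow> P x \<approx> B"
  shows "card_dvd B A"
proof -
  define rep where "rep X = (SOME x. x \<in> X)" for X :: "'a set"
  have rep: "rep (P x) \<in> P x" if "x \<in> A" for x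
    unfolding rep_def using mem[OF that] by (rule someI)
  have meet: "P x = P y" if "x \<in> A" "y \<in> A" "z \<in> P x" "z \<in> P y" for x y z
    using block_eq that by metis
  have "A = \<Union> (P ` A)"
    using mem closed by blast
  also have "\<dots> \<approx> P ` A \<times> B"
  proof -
    have "pairwise disjnt (P ` A)"
      unfolding pairwise_def disjnt_def using meet by blast
    then show ?thesis
      using Union_eqpoll_Times[of "P ` A" id B] size by auto
  qed
  also have "\<dots> \<approx> rep ` P ` A \<times> B"
  proof (rule times_eqpoll_cong)
    show "P ` A \<approx> rep ` P ` A"
    proof (rule eqpoll_sym, rule inj_on_image_eqpoll_self, rule inj_onI)
      fix X Y assume "X \<in> P ` A" "Y \<in> P ` A" "rep X = rep Y"
      then show "X = Y" using rep meet by (metis imageE)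
    qed
  qed simp
  also have "\<dots> \<approx> B \<times> rep ` P ` A"
    by (rule times_commute_eqpoll)
  finally show ?thesis
    unfolding card_dvd_def by blast
qed

context group begin

lemma inv_mult_cancel_left [simp]: "x \<in> carrier G \<Longrightarrow> y \<in> carrier G \<Longrightarrow> inv x \<otimes> (x \<otimes> y) = y"
  by (simp add: m_assoc[symmetric])

lemma mult_inv_cancel_left [simp]: "x \<in> carrier G \<Longrightarrow> y \<in> carrier G \<Longrightarrow> x \<otimes> (inv x \<otimes> y) = y"
  by (simp add: m_assoc[symmetric])

lemma conj_eq_imp_eq_inv_conj:
  "a \<otimes> y \<otimes> inv a = z \<Longrightarrow> a \<in> carrier G \<Longrightarrow> y \<in> carrier G \<Longrightarrow> y = inv a \<otimes> z \<otimes> a"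
  by (erule subst) (simp add: m_assoc)

lemma conj_eq_imp_mult_eq:
  "a \<otimes> y \<otimes> inv a = z \<Longrightarrow> a \<in> carrier G \<Longrightarrow> y \<in> carrier G \<Longrightarrow> a \<otimes> y = z \<otimes> a"
  by (erule subst) (simp add: m_assoc)

lemma inv_commute:
  assumes a: "a \<in> carrier G" and b: "b \<in> carrier G" and eq: "a \<otimes> b = b \<otimes> a"
  shows "inv a \<otimes> b = b \<otimes> inv a"
proof -
  have "inv a \<otimes> b = inv a \<otimes> (b \<otimes> a) \<otimes> inv a" using a b by (simp add: m_assoc)
  also have "\<dots> = inv a \<otimes> (a \<otimes> b) \<otimes> inv a" using eq by simp
  also have "\<dots> = b \<otimes> inv a" using a b by (simp add: m_assoc[symmetric])
  finally show ?thesis .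
qed

lemma mult_commute:
  assumes a: "a \<in> carrier G" and b: "b \<in> carrier G" and x: "x \<in> carrier G"
    and ax: "a \<otimes> x = x \<otimes> a" and bx: "b \<otimes> x = x \<otimes> b"
  shows "a \<otimes> b \<otimes> x = x \<otimes> (a \<otimes> b)"
proof -
  have "a \<otimes> b \<otimes> x = a \<otimes> (x \<otimes> b)" using a b x bx by (simp add: m_assoc)
  also have "\<dots> = (a \<otimes> x) \<otimes> b" using a b x by (simp add: m_assoc)
  also have "\<dots> = x \<otimes> (a \<otimes> b)" using a b x ax by (simp add: m_assoc)
  finally show ?thesis .
qed

lemma mem_conj_set_iff:
  assumes H: "H \<subseteq> carrier G" and y: "y \<in> carrier G" and h: "h \<in> carrier G"
  shows "h \<in> conj_set G H y \<longleftrightarrow> y \<otimes> h \<otimes> inv y \<in> H"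
proof
  assume "h \<in> conj_set G H y"
  then obtain x where x: "x \<in> H" "h = inv y \<otimes> x \<otimes> y" by (auto simp: conj_set_def)
  then show "y \<otimes> h \<otimes> inv y \<in> H" using H y by (auto simp: m_assoc)
next
  assume "y \<otimes> h \<otimes> inv y \<in> H"
  moreover have "h = inv y \<otimes> (y \<otimes> h \<otimes> inv y) \<otimes> y"
    using y h by (simp add: m_assoc)
  ultimately show "h \<in> conj_set G H y" unfolding conj_set_def by blast
qed

lemma nat_pow_mult_normalized_mem:
  assumes S: "subgroup S G" and g: "g \<in> carrier G"
    and nrm: "\<And>s. s \<in> S \<Longrightarrow> g \<otimes> s \<otimes> inv g \<in> S"
    and nrm': "\<And>s. s \<in> S \<Longrightarrow> inv g \<otimes> s \<otimes> g \<in> S"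
    and c: "c \<in> S"
  shows "inv (g [^] (n::nat)) \<otimes> (g \<otimes> c) [^] n \<in> S \<and> (g \<otimes> c) [^] n \<otimes> inv (g [^] n) \<in> S"
proof (induction n)
  case 0
  show ?case using subgroup.one_closed[OF S] by simp
next
  case (Suc n)
  have cc: "c \<in> carrier G" using subgroup.mem_carrier[OF S c] .
  let ?x = "inv (g [^] n) \<otimes> (g \<otimes> c) [^] n"
  let ?y = "(g \<otimes> c) [^] n \<otimes> inv (g [^] n)"
  have xS: "?x \<in> S" and yS: "?y \<in> S" using Suc by auto
  have "inv (g [^] Suc n) \<otimes> (g \<otimes> c) [^] Suc n = inv g \<otimes> ?x \<otimes> g \<otimes> c"
    using g cc by (simp add: m_assoc inv_mult_group)
  moreover have "inv g \<otimes> ?x \<otimes> g \<otimes> c \<in> S"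
    by (rule subgroup.m_closed[OF S nrm'[OF xS] c])
  moreover have "(g \<otimes> c) [^] Suc n \<otimes> inv (g [^] Suc n) = g \<otimes> (c \<otimes> ?y) \<otimes> inv g"
  proof -
    have "(g \<otimes> c) [^] Suc n = (g \<otimes> c) \<otimes> (g \<otimes> c) [^] n" by (rule nat_pow_Suc2) (simp add: g cc)
    moreover have "g [^] Suc n = g \<otimes> g [^] n" by (rule nat_pow_Suc2) (simp add: g)
    ultimately show ?thesis using g cc by (simp add: m_assoc inv_mult_group)
  qed
  moreover have "g \<otimes> (c \<otimes> ?y) \<otimes> inv g \<in> S"
    by (rule nrm[OF subgroup.m_closed[OF S c yS]])
  ultimately show ?case by simp
qed

lemma int_pow_mult_normalized_mem:
  assumes S: "subgroup S G" and g: "g \<in> carrier G"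
    and nrm: "\<And>s. s \<in> S \<Longrightarrow> g \<otimes> s \<otimes> inv g \<in> S"
    and nrm': "\<And>s. s \<in> S \<Longrightarrow> inv g \<otimes> s \<otimes> g \<in> S"
    and c: "c \<in> S"
  shows "inv (g [^] (i::int)) \<otimes> (g \<otimes> c) [^] i \<in> S"
proof (cases i rule: int_cases)
  case (nonneg n)
  then show ?thesis using nat_pow_mult_normalized_mem[OF assms, of n] by (simp add: int_pow_int)
next
  case (neg m)
  define n where "n = Suc m"
  have i: "i = - int n" using neg n_def by simp
  have cc: "c \<in> carrier G" using subgroup.mem_carrier[OF S c] .
  have "inv (g [^] i) \<otimes> (g \<otimes> c) [^] i = inv ((g \<otimes> c) [^] n \<otimes> inv (g [^] n))"
    using i g cc by (simp add: int_pow_neg_int inv_mult_group)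
  then show ?thesis using nat_pow_mult_normalized_mem[OF assms, of n] S
    by (simp add: subgroup.m_inv_closed)
qed

end

section \<open>Extending and twisting homomorphisms\<close>

locale degree_split = F?: group F + G?: group G
  for F :: "('f,'m) monoid_scheme" and G :: "('g,'n) monoid_scheme" +
  fixes deg :: "'f \<Rightarrow> int" and t :: 'f
  assumes deg_mult: "\<And>x y. x \<in> carrier F \<Longrightarrow> y \<in> carrier F \<Longrightarrow> deg (x \<otimes>\<^bsub>F\<^esub> y) = deg x + deg y"
    and t_carrier: "t \<in> carrier F" and deg_t: "deg t = 1"
begin

lemma deg_one: "deg \<one>\<^bsub>F\<^esub> = 0"
  using deg_mult[of "\<one>\<^bsub>F\<^esub>" "\<one>\<^bsub>F\<^esub>"] by simp

lemma deg_inv: "x \<in> carrier F \<Longrightarrow> deg (inv\<^bsub>F\<^esub> x) = - deg x"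
  using deg_mult[of x "inv\<^bsub>F\<^esub> x"] deg_one by simp

lemma deg_nat_pow: "x \<in> carrier F \<Longrightarrow> deg (x [^]\<^bsub>F\<^esub> (n::nat)) = int n * deg x"
  by (induction n) (auto simp: deg_one deg_mult algebra_simps)

lemma deg_int_pow: "x \<in> carrier F \<Longrightarrow> deg (x [^]\<^bsub>F\<^esub> (i::int)) = i * deg x"
proof (cases "i < 0")
  case True
  assume x: "x \<in> carrier F"
  have "x [^]\<^bsub>F\<^esub> i = inv\<^bsub>F\<^esub> (x [^]\<^bsub>F\<^esub> nat (-i))"
    using True unfolding int_pow_def2 by simp
  moreover have "x [^]\<^bsub>F\<^esub> nat (-i) \<in> carrier F" using x by simp
  ultimately have "deg (x [^]\<^bsub>F\<^esub> i) = - (int (nat (-i)) * deg x)"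
    using x by (simp only: deg_inv deg_nat_pow)
  then show ?thesis using True by simp
next
  case False
  assume x: "x \<in> carrier F"
  have "x [^]\<^bsub>F\<^esub> i = x [^]\<^bsub>F\<^esub> nat i"
    using False unfolding int_pow_def2 by simp
  then have "deg (x [^]\<^bsub>F\<^esub> i) = int (nat i) * deg x"
    using x by (simp only: deg_nat_pow)
  then show ?thesis using False by simp
qed

definition deg0 :: "'f set" where
  "deg0 = {k \<in> carrier F. deg k = 0}"

definition deg0_part :: "'f \<Rightarrow> 'f" where
  "deg0_part f = f \<otimes>\<^bsub>F\<^esub> inv\<^bsub>F\<^esub> (t [^]\<^bsub>F\<^esub> deg f)"

lemma deg0_carrier: "x \<in> deg0 \<Longrightarrow> x \<in> carrier F"
  by (simp add: deg0_def)

lemma deg0_part_deg0: "f \<in> carrier F \<Longrightarrow> deg0_part f \<in> deg0"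
  by (simp add: deg0_part_def deg0_def deg_mult deg_inv deg_int_pow t_carrier deg_t)

lemma deg0_part_carrier: "f \<in> carrier F \<Longrightarrow> deg0_part f \<in> carrier F"
  using deg0_part_deg0 deg0_carrier by blast

lemma deg0_part_mult_t_pow: "f \<in> carrier F \<Longrightarrow> f = deg0_part f \<otimes>\<^bsub>F\<^esub> t [^]\<^bsub>F\<^esub> deg f"
  by (simp add: deg0_part_def t_carrier F.m_assoc)

lemma deg0_conj: "y \<in> carrier F \<Longrightarrow> x \<in> deg0 \<Longrightarrow> y \<otimes>\<^bsub>F\<^esub> x \<otimes>\<^bsub>F\<^esub> inv\<^bsub>F\<^esub> y \<in> deg0"
  by (simp add: deg0_def deg_mult deg_inv)

lemma deg0_conj_inv: "y \<in> carrier F \<Longrightarrow> x \<in> deg0 \<Longrightarrow> inv\<^bsub>F\<^esub> y \<otimes>\<^bsub>F\<^esub> x \<otimes>\<^bsub>F\<^esub> y \<in> deg0"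
  using deg0_conj[of "inv\<^bsub>F\<^esub> y" x] by simp

lemma homs_group_hom: "\<phi> \<in> homs F G \<Longrightarrow> group_hom F G \<phi>"
  unfolding homs_def group_hom_def group_hom_axioms_def
  by (simp add: F.group_axioms G.group_axioms)

lemma homs_eqI:
  assumes \<psi>1: "\<psi>1 \<in> homs F G" and \<psi>2: "\<psi>2 \<in> homs F G"
    and deg0_eq: "\<And>k. k \<in> deg0 \<Longrightarrow> \<psi>1 k = \<psi>2 k" and t_eq: "\<psi>1 t = \<psi>2 t"
  shows "\<psi>1 = \<psi>2"
proof
  fix f show "\<psi>1 f = \<psi>2 f"
  proof (cases "f \<in> carrier F")
    case True
    interpret A: group_hom F G \<psi>1 by (rule homs_group_hom[OF \<psi>1])
    interpret B: group_hom F G \<psi>2 by (rule homs_group_hom[OF \<psi>2])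
    have k: "deg0_part f \<in> carrier F" "t [^]\<^bsub>F\<^esub> deg f \<in> carrier F"
      using True t_carrier deg0_part_carrier by auto
    have "\<psi>1 f = \<psi>1 (deg0_part f) \<otimes>\<^bsub>G\<^esub> \<psi>1 (t [^]\<^bsub>F\<^esub> deg f)"
      using deg0_part_mult_t_pow[OF True] A.hom_mult[OF k] by metis
    also have "\<dots> = \<psi>2 (deg0_part f) \<otimes>\<^bsub>G\<^esub> \<psi>2 (t [^]\<^bsub>F\<^esub> deg f)"
      using deg0_eq[OF deg0_part_deg0[OF True]] t_eq
        A.hom_int_pow[OF t_carrier] B.hom_int_pow[OF t_carrier] by metis
    also have "\<dots> = \<psi>2 f"
      using deg0_part_mult_t_pow[OF True] B.hom_mult[OF k] by metis
    finally show ?thesis .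
  next
    case False
    then show ?thesis using \<psi>1 \<psi>2 by (auto simp: homs_def extensional_def)
  qed
qed

lemma conj_nat_pow_deg0:
  assumes \<phi>: "\<phi> \<in> homs F G" and a: "a \<in> carrier G"
    and a_conj: "\<And>x. x \<in> deg0 \<Longrightarrow> a \<otimes>\<^bsub>G\<^esub> \<phi> x \<otimes>\<^bsub>G\<^esub> inv\<^bsub>G\<^esub> a = \<phi> (t \<otimes>\<^bsub>F\<^esub> x \<otimes>\<^bsub>F\<^esub> inv\<^bsub>F\<^esub> t)"
  shows "x \<in> deg0 \<Longrightarrow> a [^]\<^bsub>G\<^esub> (n::nat) \<otimes>\<^bsub>G\<^esub> \<phi> x \<otimes>\<^bsub>G\<^esub> inv\<^bsub>G\<^esub> (a [^]\<^bsub>G\<^esub> n)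
     = \<phi> (t [^]\<^bsub>F\<^esub> n \<otimes>\<^bsub>F\<^esub> x \<otimes>\<^bsub>F\<^esub> inv\<^bsub>F\<^esub> (t [^]\<^bsub>F\<^esub> n))"
proof (induction n arbitrary: x)
  case 0
  interpret A: group_hom F G \<phi> by (rule homs_group_hom[OF \<phi>])
  show ?case using deg0_carrier[OF 0] by simp
next
  case (Suc n)
  interpret A: group_hom F G \<phi> by (rule homs_group_hom[OF \<phi>])
  have x: "x \<in> carrier F" using deg0_carrier[OF Suc.prems] .
  have "a [^]\<^bsub>G\<^esub> Suc n \<otimes>\<^bsub>G\<^esub> \<phi> x \<otimes>\<^bsub>G\<^esub> inv\<^bsub>G\<^esub> (a [^]\<^bsub>G\<^esub> Suc n)
      = a [^]\<^bsub>G\<^esub> n \<otimes>\<^bsub>G\<^esub> (a \<otimes>\<^bsub>G\<^esub> \<phi> x \<otimes>\<^bsub>G\<^esub> inv\<^bsub>G\<^esub> a) \<otimes>\<^bsub>G\<^esub> inv\<^bsub>G\<^esub> (a [^]\<^bsub>G\<^esub> n)"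
    using a x by (simp add: G.m_assoc G.inv_mult_group)
  also have "\<dots> = a [^]\<^bsub>G\<^esub> n \<otimes>\<^bsub>G\<^esub> \<phi> (t \<otimes>\<^bsub>F\<^esub> x \<otimes>\<^bsub>F\<^esub> inv\<^bsub>F\<^esub> t) \<otimes>\<^bsub>G\<^esub> inv\<^bsub>G\<^esub> (a [^]\<^bsub>G\<^esub> n)"
    using a_conj[OF Suc.prems] by simp
  also have "\<dots> = \<phi> (t [^]\<^bsub>F\<^esub> n \<otimes>\<^bsub>F\<^esub> (t \<otimes>\<^bsub>F\<^esub> x \<otimes>\<^bsub>F\<^esub> inv\<^bsub>F\<^esub> t) \<otimes>\<^bsub>F\<^esub> inv\<^bsub>F\<^esub> (t [^]\<^bsub>F\<^esub> n))"
    using Suc.IH[OF deg0_conj[OF t_carrier Suc.prems]] .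
  also have "t [^]\<^bsub>F\<^esub> n \<otimes>\<^bsub>F\<^esub> (t \<otimes>\<^bsub>F\<^esub> x \<otimes>\<^bsub>F\<^esub> inv\<^bsub>F\<^esub> t) \<otimes>\<^bsub>F\<^esub> inv\<^bsub>F\<^esub> (t [^]\<^bsub>F\<^esub> n)
      = t [^]\<^bsub>F\<^esub> Suc n \<otimes>\<^bsub>F\<^esub> x \<otimes>\<^bsub>F\<^esub> inv\<^bsub>F\<^esub> (t [^]\<^bsub>F\<^esub> Suc n)"
    using t_carrier x by (simp add: F.m_assoc F.inv_mult_group)
  finally show ?case .
qed

lemma conj_int_pow_deg0:
  assumes \<phi>: "\<phi> \<in> homs F G" and a: "a \<in> carrier G"
    and a_conj: "\<And>x. x \<in> deg0 \<Longrightarrow> a \<otimes>\<^bsub>G\<^esub> \<phi> x \<otimes>\<^bsub>G\<^esub> inv\<^bsub>G\<^esub> a = \<phi> (t \<otimes>\<^bsub>F\<^esub> x \<otimes>\<^bsub>F\<^esub> inv\<^bsub>F\<^esub> t)"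
    and x: "x \<in> deg0"
  shows "a [^]\<^bsub>G\<^esub> (i::int) \<otimes>\<^bsub>G\<^esub> \<phi> x \<otimes>\<^bsub>G\<^esub> inv\<^bsub>G\<^esub> (a [^]\<^bsub>G\<^esub> i)
     = \<phi> (t [^]\<^bsub>F\<^esub> i \<otimes>\<^bsub>F\<^esub> x \<otimes>\<^bsub>F\<^esub> inv\<^bsub>F\<^esub> (t [^]\<^bsub>F\<^esub> i))"
proof (cases i rule: int_cases)
  case (nonneg n)
  then show ?thesis using conj_nat_pow_deg0[OF \<phi> a a_conj x, of n] by (simp add: int_pow_int)
next
  case (neg m)
  define n where "n = Suc m"
  have i: "i = - int n" using neg n_def by simp
  interpret A: group_hom F G \<phi> by (rule homs_group_hom[OF \<phi>])
  have xc: "x \<in> carrier F" using deg0_carrier[OF x] .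
  define x' where "x' = inv\<^bsub>F\<^esub> (t [^]\<^bsub>F\<^esub> n) \<otimes>\<^bsub>F\<^esub> x \<otimes>\<^bsub>F\<^esub> t [^]\<^bsub>F\<^esub> n"
  have x': "x' \<in> deg0" unfolding x'_def by (rule deg0_conj_inv[OF _ x]) (simp add: t_carrier)
  have "t [^]\<^bsub>F\<^esub> n \<otimes>\<^bsub>F\<^esub> x' \<otimes>\<^bsub>F\<^esub> inv\<^bsub>F\<^esub> (t [^]\<^bsub>F\<^esub> n) = x"
    unfolding x'_def using xc t_carrier by (simp add: F.m_assoc)
  then have "a [^]\<^bsub>G\<^esub> n \<otimes>\<^bsub>G\<^esub> \<phi> x' \<otimes>\<^bsub>G\<^esub> inv\<^bsub>G\<^esub> (a [^]\<^bsub>G\<^esub> n) = \<phi> x"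
    using conj_nat_pow_deg0[OF \<phi> a a_conj x', of n] by simp
  then have "\<phi> x' = inv\<^bsub>G\<^esub> (a [^]\<^bsub>G\<^esub> n) \<otimes>\<^bsub>G\<^esub> \<phi> x \<otimes>\<^bsub>G\<^esub> a [^]\<^bsub>G\<^esub> n"
    by (rule G.conj_eq_imp_eq_inv_conj) (simp_all add: a deg0_carrier[OF x'])
  then show ?thesis
    using i a t_carrier by (simp add: G.int_pow_neg_int F.int_pow_neg_int x'_def)
qed

definition extend :: "('f \<Rightarrow> 'g) \<Rightarrow> 'g \<Rightarrow> 'f \<Rightarrow> 'g" where
  "extend \<phi> a = (\<lambda>f\<in>carrier F. \<phi> (deg0_part f) \<otimes>\<^bsub>G\<^esub> a [^]\<^bsub>G\<^esub> deg f)"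

lemma extend_homs:
  assumes \<phi>: "\<phi> \<in> homs F G" and a: "a \<in> carrier G"
    and a_conj: "\<And>x. x \<in> deg0 \<Longrightarrow> a \<otimes>\<^bsub>G\<^esub> \<phi> x \<otimes>\<^bsub>G\<^esub> inv\<^bsub>G\<^esub> a = \<phi> (t \<otimes>\<^bsub>F\<^esub> x \<otimes>\<^bsub>F\<^esub> inv\<^bsub>F\<^esub> t)"
  shows "extend \<phi> a \<in> homs F G"
proof -
  interpret A: group_hom F G \<phi> by (rule homs_group_hom[OF \<phi>])
  have mult: "extend \<phi> a (f \<otimes>\<^bsub>F\<^esub> g) = extend \<phi> a f \<otimes>\<^bsub>G\<^esub> extend \<phi> a g"
    if f: "f \<in> carrier F" and g: "g \<in> carrier F" for f g
  proof -
    define m where "m = deg f"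
    define n where "n = deg g"
    define g' where "g' = t [^]\<^bsub>F\<^esub> m \<otimes>\<^bsub>F\<^esub> deg0_part g \<otimes>\<^bsub>F\<^esub> inv\<^bsub>F\<^esub> (t [^]\<^bsub>F\<^esub> m)"
    have kf: "deg0_part f \<in> carrier F" "deg0_part g \<in> carrier F" using deg0_part_carrier f g by auto
    have tm: "t [^]\<^bsub>F\<^esub> m \<in> carrier F" using t_carrier by simp
    have am: "a [^]\<^bsub>G\<^esub> m \<in> carrier G" "a [^]\<^bsub>G\<^esub> n \<in> carrier G" using a by auto
    have "a [^]\<^bsub>G\<^esub> m \<otimes>\<^bsub>G\<^esub> \<phi> (deg0_part g) \<otimes>\<^bsub>G\<^esub> inv\<^bsub>G\<^esub> (a [^]\<^bsub>G\<^esub> m) = \<phi> g'"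
      unfolding g'_def using conj_int_pow_deg0[OF \<phi> a a_conj deg0_part_deg0[OF g]] .
    then have swap: "a [^]\<^bsub>G\<^esub> m \<otimes>\<^bsub>G\<^esub> \<phi> (deg0_part g) = \<phi> g' \<otimes>\<^bsub>G\<^esub> a [^]\<^bsub>G\<^esub> m"
      by (rule G.conj_eq_imp_mult_eq) (simp_all add: am kf)
    have part: "deg0_part f \<otimes>\<^bsub>F\<^esub> g' = deg0_part (f \<otimes>\<^bsub>F\<^esub> g)"
      using f g t_carrier tm unfolding deg0_part_def g'_def m_def
      by (simp add: deg_mult F.m_assoc F.int_pow_mult F.inv_mult_group)
    have g': "g' \<in> carrier F" unfolding g'_def using kf tm by simp
    have "extend \<phi> a f \<otimes>\<^bsub>G\<^esub> extend \<phi> a g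
        = \<phi> (deg0_part f) \<otimes>\<^bsub>G\<^esub> (a [^]\<^bsub>G\<^esub> m \<otimes>\<^bsub>G\<^esub> \<phi> (deg0_part g)) \<otimes>\<^bsub>G\<^esub> a [^]\<^bsub>G\<^esub> n"
      using f g kf am by (simp add: extend_def m_def n_def G.m_assoc)
    also have "\<dots> = \<phi> (deg0_part f) \<otimes>\<^bsub>G\<^esub> \<phi> g' \<otimes>\<^bsub>G\<^esub> (a [^]\<^bsub>G\<^esub> m \<otimes>\<^bsub>G\<^esub> a [^]\<^bsub>G\<^esub> n)"
      unfolding swap using kf g' am by (simp add: G.m_assoc)
    also have "\<dots> = \<phi> (deg0_part (f \<otimes>\<^bsub>F\<^esub> g)) \<otimes>\<^bsub>G\<^esub> a [^]\<^bsub>G\<^esub> (m + n)"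
      using kf g' a by (simp add: part[symmetric] G.int_pow_mult)
    also have "\<dots> = extend \<phi> a (f \<otimes>\<^bsub>F\<^esub> g)"
      using f g by (simp add: extend_def m_def n_def deg_mult)
    finally show ?thesis by simp
  qed
  have "extend \<phi> a \<in> carrier F \<rightarrow> carrier G"
    using a deg0_part_carrier by (auto simp: extend_def)
  then show ?thesis using mult unfolding homs_def hom_def extend_def by auto
qed

lemma extend_deg0: "\<phi> \<in> homs F G \<Longrightarrow> a \<in> carrier G \<Longrightarrow> k \<in> deg0 \<Longrightarrow> extend \<phi> a k = \<phi> k"
  using group_hom.hom_closed[OF homs_group_hom]
  by (simp add: deg0_def extend_def deg0_part_def)

lemma extend_t: "\<phi> \<in> homs F G \<Longrightarrow> a \<in> carrier G \<Longrightarrow> extend \<phi> a t = a"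
  using group_hom.hom_one[OF homs_group_hom, of \<phi>]
  by (simp add: extend_def deg0_part_def t_carrier deg_t)

definition centralizes_deg0 :: "('f \<Rightarrow> 'g) \<Rightarrow> 'g \<Rightarrow> bool" where
  "centralizes_deg0 \<phi> c \<longleftrightarrow> c \<in> carrier G \<and> (\<forall>k\<in>deg0. c \<otimes>\<^bsub>G\<^esub> \<phi> k = \<phi> k \<otimes>\<^bsub>G\<^esub> c)"

definition twist :: "('f \<Rightarrow> 'g) \<Rightarrow> 'g \<Rightarrow> 'f \<Rightarrow> 'g" where
  "twist \<phi> c = extend \<phi> (\<phi> t \<otimes>\<^bsub>G\<^esub> c)"

lemma centralizes_deg0_mult:
  assumes \<phi>: "\<phi> \<in> homs F G" and c: "centralizes_deg0 \<phi> c" and d: "centralizes_deg0 \<phi> d"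
  shows "centralizes_deg0 \<phi> (c \<otimes>\<^bsub>G\<^esub> d)"
proof -
  interpret A: group_hom F G \<phi> by (rule homs_group_hom[OF \<phi>])
  show ?thesis
    using c d deg0_carrier unfolding centralizes_deg0_def by (auto intro: G.mult_commute)
qed

lemma twist_homs_deg0_t:
  assumes \<phi>: "\<phi> \<in> homs F G" and c: "centralizes_deg0 \<phi> c"
  shows "twist \<phi> c \<in> homs F G" "\<And>k. k \<in> deg0 \<Longrightarrow> twist \<phi> c k = \<phi> k"
    "twist \<phi> c t = \<phi> t \<otimes>\<^bsub>G\<^esub> c"
proof -
  interpret A: group_hom F G \<phi> by (rule homs_group_hom[OF \<phi>])
  have cc: "c \<in> carrier G" using c by (simp add: centralizes_deg0_def)
  have a: "\<phi> t \<otimes>\<^bsub>G\<^esub> c \<in> carrier G" using cc t_carrier by simp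
  have a_conj: "(\<phi> t \<otimes>\<^bsub>G\<^esub> c) \<otimes>\<^bsub>G\<^esub> \<phi> x \<otimes>\<^bsub>G\<^esub> inv\<^bsub>G\<^esub> (\<phi> t \<otimes>\<^bsub>G\<^esub> c) = \<phi> (t \<otimes>\<^bsub>F\<^esub> x \<otimes>\<^bsub>F\<^esub> inv\<^bsub>F\<^esub> t)"
    if x: "x \<in> deg0" for x
  proof -
    have xc: "x \<in> carrier F" using deg0_carrier[OF x] .
    have cx: "c \<otimes>\<^bsub>G\<^esub> \<phi> x = \<phi> x \<otimes>\<^bsub>G\<^esub> c" using c x by (simp add: centralizes_deg0_def)
    have "(\<phi> t \<otimes>\<^bsub>G\<^esub> c) \<otimes>\<^bsub>G\<^esub> \<phi> x \<otimes>\<^bsub>G\<^esub> inv\<^bsub>G\<^esub> (\<phi> t \<otimes>\<^bsub>G\<^esub> c)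
       = \<phi> t \<otimes>\<^bsub>G\<^esub> (c \<otimes>\<^bsub>G\<^esub> \<phi> x) \<otimes>\<^bsub>G\<^esub> inv\<^bsub>G\<^esub> c \<otimes>\<^bsub>G\<^esub> inv\<^bsub>G\<^esub> (\<phi> t)"
      using cc t_carrier xc by (simp add: G.m_assoc G.inv_mult_group)
    also have "\<dots> = \<phi> (t \<otimes>\<^bsub>F\<^esub> x \<otimes>\<^bsub>F\<^esub> inv\<^bsub>F\<^esub> t)"
      unfolding cx using cc t_carrier xc by (simp add: G.m_assoc)
    finally show ?thesis .
  qed
  show "twist \<phi> c \<in> homs F G" unfolding twist_def by (rule extend_homs[OF \<phi> a a_conj])
  show "\<And>k. k \<in> deg0 \<Longrightarrow> twist \<phi> c k = \<phi> k" unfolding twist_def using extend_deg0[OF \<phi> a] .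
  show "twist \<phi> c t = \<phi> t \<otimes>\<^bsub>G\<^esub> c" unfolding twist_def using extend_t[OF \<phi> a] .
qed

lemmas twist_homs = twist_homs_deg0_t(1)
  and twist_deg0 = twist_homs_deg0_t(2)
  and twist_t = twist_homs_deg0_t(3)

lemma twist_unique:
  assumes \<phi>: "\<phi> \<in> homs F G" and c: "centralizes_deg0 \<phi> c" and \<psi>: "\<psi> \<in> homs F G"
    and "\<And>k. k \<in> deg0 \<Longrightarrow> \<psi> k = \<phi> k" and "\<psi> t = \<phi> t \<otimes>\<^bsub>G\<^esub> c"
  shows "\<psi> = twist \<phi> c"
  by (rule homs_eqI[OF \<psi> twist_homs[OF \<phi> c]]) (simp_all add: assms twist_deg0[OF \<phi> c] twist_t[OF \<phi> c])

lemma twist_one: "\<phi> \<in> homs F G \<Longrightarrow> twist \<phi> \<one>\<^bsub>G\<^esub> = \<phi>"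
  using twist_unique[of \<phi> "\<one>\<^bsub>G\<^esub>" \<phi>] group_hom.hom_closed[OF homs_group_hom] t_carrier deg0_carrier
  by (simp add: centralizes_deg0_def)

lemma twist_twist:
  assumes \<phi>: "\<phi> \<in> homs F G" and c: "centralizes_deg0 \<phi> c" and d: "centralizes_deg0 \<phi> d"
  shows "twist (twist \<phi> c) d = twist \<phi> (c \<otimes>\<^bsub>G\<^esub> d)"
proof -
  have d': "centralizes_deg0 (twist \<phi> c) d"
    using d twist_deg0[OF \<phi> c] by (simp add: centralizes_deg0_def)
  have cd: "centralizes_deg0 \<phi> (c \<otimes>\<^bsub>G\<^esub> d)" by (rule centralizes_deg0_mult[OF \<phi> c d])
  have "twist \<phi> (c \<otimes>\<^bsub>G\<^esub> d) = twist (twist \<phi> c) d"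
    by (rule twist_unique[OF twist_homs[OF \<phi> c] d' twist_homs[OF \<phi> cd]])
      (use twist_deg0[OF \<phi> c] twist_deg0[OF \<phi> cd] twist_t[OF \<phi> c] twist_t[OF \<phi> cd]
         c d t_carrier group_hom.hom_closed[OF homs_group_hom[OF \<phi>]]
         in \<open>simp_all add: centralizes_deg0_def G.m_assoc\<close>)
  then show ?thesis by simp
qed

definition conj_hom :: "'g \<Rightarrow> ('f \<Rightarrow> 'g) \<Rightarrow> 'f \<Rightarrow> 'g" where
  "conj_hom h \<phi> = (\<lambda>f\<in>carrier F. inv\<^bsub>G\<^esub> h \<otimes>\<^bsub>G\<^esub> \<phi> f \<otimes>\<^bsub>G\<^esub> h)"

lemma conj_hom_homs:
  assumes \<phi>: "\<phi> \<in> homs F G" and h: "h \<in> carrier G" shows "conj_hom h \<phi> \<in> homs F G"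
proof -
  interpret A: group_hom F G \<phi> by (rule homs_group_hom[OF \<phi>])
  have "inv\<^bsub>G\<^esub> h \<otimes>\<^bsub>G\<^esub> \<phi> (x \<otimes>\<^bsub>F\<^esub> y) \<otimes>\<^bsub>G\<^esub> h =
        (inv\<^bsub>G\<^esub> h \<otimes>\<^bsub>G\<^esub> \<phi> x \<otimes>\<^bsub>G\<^esub> h) \<otimes>\<^bsub>G\<^esub> (inv\<^bsub>G\<^esub> h \<otimes>\<^bsub>G\<^esub> \<phi> y \<otimes>\<^bsub>G\<^esub> h)"
    if "x \<in> carrier F" "y \<in> carrier F" for x y using that h by (simp add: G.m_assoc)
  then show ?thesis using h unfolding homs_def hom_def conj_hom_def by auto
qed

lemma conj_hom_conj_hom:
  assumes \<phi>: "\<phi> \<in> homs F G" and h: "h \<in> carrier G" and h': "h' \<in> carrier G"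
  shows "conj_hom h (conj_hom h' \<phi>) = conj_hom (h' \<otimes>\<^bsub>G\<^esub> h) \<phi>"
  using h h' group_hom.hom_closed[OF homs_group_hom[OF \<phi>]]
  unfolding conj_hom_def by (auto simp: G.m_assoc G.inv_mult_group)

lemma conj_hom_one: "\<phi> \<in> homs F G \<Longrightarrow> conj_hom \<one>\<^bsub>G\<^esub> \<phi> = \<phi>"
  using group_hom.hom_closed[OF homs_group_hom]
  unfolding conj_hom_def homs_def extensional_def by fastforce

lemma conj_hom_inv_conj_hom:
  "\<phi> \<in> homs F G \<Longrightarrow> h \<in> carrier G \<Longrightarrow> conj_hom (inv\<^bsub>G\<^esub> h) (conj_hom h \<phi>) = \<phi>"
  by (simp add: conj_hom_conj_hom conj_hom_one)

lemma conj_hom_twist: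
  assumes \<phi>: "\<phi> \<in> homs F G" and h: "h \<in> carrier G" and c: "centralizes_deg0 \<phi> c"
  shows "conj_hom h (twist \<phi> c) = twist (conj_hom h \<phi>) (inv\<^bsub>G\<^esub> h \<otimes>\<^bsub>G\<^esub> c \<otimes>\<^bsub>G\<^esub> h)"
proof -
  interpret A: group_hom F G \<phi> by (rule homs_group_hom[OF \<phi>])
  have cc: "c \<in> carrier G" using c by (simp add: centralizes_deg0_def)
  have c': "centralizes_deg0 (conj_hom h \<phi>) (inv\<^bsub>G\<^esub> h \<otimes>\<^bsub>G\<^esub> c \<otimes>\<^bsub>G\<^esub> h)"
    unfolding centralizes_deg0_def
  proof (intro conjI ballI)
    show "inv\<^bsub>G\<^esub> h \<otimes>\<^bsub>G\<^esub> c \<otimes>\<^bsub>G\<^esub> h \<in> carrier G" using h cc by simp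
    fix k assume k: "k \<in> deg0"
    have kc: "k \<in> carrier F" using deg0_carrier[OF k] .
    have ck: "c \<otimes>\<^bsub>G\<^esub> \<phi> k = \<phi> k \<otimes>\<^bsub>G\<^esub> c" using c k by (simp add: centralizes_deg0_def)
    have "inv\<^bsub>G\<^esub> h \<otimes>\<^bsub>G\<^esub> c \<otimes>\<^bsub>G\<^esub> h \<otimes>\<^bsub>G\<^esub> conj_hom h \<phi> k = inv\<^bsub>G\<^esub> h \<otimes>\<^bsub>G\<^esub> (c \<otimes>\<^bsub>G\<^esub> \<phi> k) \<otimes>\<^bsub>G\<^esub> h"
      using kc h cc by (simp add: conj_hom_def G.m_assoc)
    also have "\<dots> = conj_hom h \<phi> k \<otimes>\<^bsub>G\<^esub> (inv\<^bsub>G\<^esub> h \<otimes>\<^bsub>G\<^esub> c \<otimes>\<^bsub>G\<^esub> h)"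
      unfolding ck using kc h cc by (simp add: conj_hom_def G.m_assoc)
    finally show "inv\<^bsub>G\<^esub> h \<otimes>\<^bsub>G\<^esub> c \<otimes>\<^bsub>G\<^esub> h \<otimes>\<^bsub>G\<^esub> conj_hom h \<phi> k
      = conj_hom h \<phi> k \<otimes>\<^bsub>G\<^esub> (inv\<^bsub>G\<^esub> h \<otimes>\<^bsub>G\<^esub> c \<otimes>\<^bsub>G\<^esub> h)" .
  qed
  show ?thesis
  proof (rule twist_unique[OF conj_hom_homs[OF \<phi> h] c' conj_hom_homs[OF twist_homs[OF \<phi> c] h]])
    show "\<And>k. k \<in> deg0 \<Longrightarrow> conj_hom h (twist \<phi> c) k = conj_hom h \<phi> k"
      using twist_deg0[OF \<phi> c] deg0_carrier by (simp add: conj_hom_def)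
    show "conj_hom h (twist \<phi> c) t = conj_hom h \<phi> t \<otimes>\<^bsub>G\<^esub> (inv\<^bsub>G\<^esub> h \<otimes>\<^bsub>G\<^esub> c \<otimes>\<^bsub>G\<^esub> h)"
      using twist_t[OF \<phi> c] t_carrier h cc by (simp add: conj_hom_def G.m_assoc)
  qed
qed

end

section \<open>The core\<close>

locale core_setting = degree_split F G deg t
  for F :: "('f,'m) monoid_scheme" and G :: "('g,'n) monoid_scheme" and deg t +
  fixes H :: "'g set"
  assumes H_subgroup: "subgroup H G"
begin

definition core :: "('f \<Rightarrow> 'g) \<Rightarrow> 'g set" where
  "core \<phi> = phi_core F deg G \<phi> H"

lemma H_carrier: "h \<in> H \<Longrightarrow> h \<in> carrier G"
  using subgroup.mem_carrier[OF H_subgroup] .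

lemma mem_core_iff:
  assumes \<phi>: "\<phi> \<in> homs F G"
  shows "h \<in> core \<phi> \<longleftrightarrow> h \<in> carrier G \<and> (\<forall>f\<in>carrier F. \<phi> f \<otimes>\<^bsub>G\<^esub> h \<otimes>\<^bsub>G\<^esub> inv\<^bsub>G\<^esub> (\<phi> f) \<in> H)
     \<and> (\<forall>k\<in>deg0. h \<otimes>\<^bsub>G\<^esub> \<phi> k = \<phi> k \<otimes>\<^bsub>G\<^esub> h)"
proof -
  interpret A: group_hom F G \<phi> by (rule homs_group_hom[OF \<phi>])
  show ?thesis
    unfolding core_def phi_core_def deg0_def
    using G.mem_conj_set_iff[OF subgroup.subset[OF H_subgroup]] by auto
qed

lemma core_carrier: "\<phi> \<in> homs F G \<Longrightarrow> h \<in> core \<phi> \<Longrightarrow> h \<in> carrier G"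
  using mem_core_iff by blast

lemma core_conj_mem: "\<phi> \<in> homs F G \<Longrightarrow> h \<in> core \<phi> \<Longrightarrow> f \<in> carrier F
    \<Longrightarrow> \<phi> f \<otimes>\<^bsub>G\<^esub> h \<otimes>\<^bsub>G\<^esub> inv\<^bsub>G\<^esub> (\<phi> f) \<in> H"
  using mem_core_iff by blast

lemma core_commute_deg0: "\<phi> \<in> homs F G \<Longrightarrow> h \<in> core \<phi> \<Longrightarrow> k \<in> deg0
    \<Longrightarrow> h \<otimes>\<^bsub>G\<^esub> \<phi> k = \<phi> k \<otimes>\<^bsub>G\<^esub> h"
  using mem_core_iff by blast

lemma core_subset: assumes \<phi>: "\<phi> \<in> homs F G" shows "core \<phi> \<subseteq> H"
proof
  interpret A: group_hom F G \<phi> by (rule homs_group_hom[OF \<phi>])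
  fix h assume "h \<in> core \<phi>"
  then show "h \<in> H" using core_conj_mem[OF \<phi> _ F.one_closed] core_carrier[OF \<phi>] by simp
qed

lemma core_centralizes_deg0: "\<phi> \<in> homs F G \<Longrightarrow> h \<in> core \<phi> \<Longrightarrow> centralizes_deg0 \<phi> h"
  unfolding centralizes_deg0_def using mem_core_iff by blast

lemma core_inv_closed:
  assumes \<phi>: "\<phi> \<in> homs F G" and a: "a \<in> core \<phi>" shows "inv\<^bsub>G\<^esub> a \<in> core \<phi>"
proof -
  interpret A: group_hom F G \<phi> by (rule homs_group_hom[OF \<phi>])
  have ac: "a \<in> carrier G" using core_carrier[OF \<phi> a] .
  show ?thesis unfolding mem_core_iff[OF \<phi>]
  proof (intro conjI ballI)
    fix f assume f: "f \<in> carrier F"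
    have "inv\<^bsub>G\<^esub> (\<phi> f \<otimes>\<^bsub>G\<^esub> a \<otimes>\<^bsub>G\<^esub> inv\<^bsub>G\<^esub> (\<phi> f)) \<in> H"
      using subgroup.m_inv_closed[OF H_subgroup core_conj_mem[OF \<phi> a f]] .
    then show "\<phi> f \<otimes>\<^bsub>G\<^esub> inv\<^bsub>G\<^esub> a \<otimes>\<^bsub>G\<^esub> inv\<^bsub>G\<^esub> (\<phi> f) \<in> H"
      using ac f by (simp add: G.inv_mult_group G.m_assoc)
  next
    fix k assume k: "k \<in> deg0"
    show "inv\<^bsub>G\<^esub> a \<otimes>\<^bsub>G\<^esub> \<phi> k = \<phi> k \<otimes>\<^bsub>G\<^esub> inv\<^bsub>G\<^esub> a"
      using core_commute_deg0[OF \<phi> a k] ac deg0_carrier[OF k] by (intro G.inv_commute) simp_all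
  qed (use ac in simp)
qed

lemma core_mult_closed:
  assumes \<phi>: "\<phi> \<in> homs F G" and a: "a \<in> core \<phi>" and b: "b \<in> core \<phi>"
  shows "a \<otimes>\<^bsub>G\<^esub> b \<in> core \<phi>"
proof -
  interpret A: group_hom F G \<phi> by (rule homs_group_hom[OF \<phi>])
  have ac: "a \<in> carrier G" and bc: "b \<in> carrier G" using core_carrier[OF \<phi>] a b by auto
  show ?thesis unfolding mem_core_iff[OF \<phi>]
  proof (intro conjI ballI)
    fix f assume f: "f \<in> carrier F"
    have "(\<phi> f \<otimes>\<^bsub>G\<^esub> a \<otimes>\<^bsub>G\<^esub> inv\<^bsub>G\<^esub> (\<phi> f)) \<otimes>\<^bsub>G\<^esub> (\<phi> f \<otimes>\<^bsub>G\<^esub> b \<otimes>\<^bsub>G\<^esub> inv\<^bsub>G\<^esub> (\<phi> f)) \<in> H"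
      using subgroup.m_closed[OF H_subgroup core_conj_mem[OF \<phi> a f] core_conj_mem[OF \<phi> b f]] .
    then show "\<phi> f \<otimes>\<^bsub>G\<^esub> (a \<otimes>\<^bsub>G\<^esub> b) \<otimes>\<^bsub>G\<^esub> inv\<^bsub>G\<^esub> (\<phi> f) \<in> H"
      using ac bc f by (simp add: G.m_assoc)
  next
    fix k assume k: "k \<in> deg0"
    show "a \<otimes>\<^bsub>G\<^esub> b \<otimes>\<^bsub>G\<^esub> \<phi> k = \<phi> k \<otimes>\<^bsub>G\<^esub> (a \<otimes>\<^bsub>G\<^esub> b)"
      using core_commute_deg0[OF \<phi> a k] core_commute_deg0[OF \<phi> b k] ac bc deg0_carrier[OF k]
      by (intro G.mult_commute) simp_all
  qed (use ac bc in simp)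
qed

lemma core_subgroup: assumes \<phi>: "\<phi> \<in> homs F G" shows "subgroup (core \<phi>) G"
proof (rule G.subgroupI)
  interpret A: group_hom F G \<phi> by (rule homs_group_hom[OF \<phi>])
  show "core \<phi> \<noteq> {}"
    using mem_core_iff[OF \<phi>, of "\<one>\<^bsub>G\<^esub>"] subgroup.one_closed[OF H_subgroup] deg0_carrier by auto
qed (use core_carrier[OF \<phi>] core_inv_closed[OF \<phi>] core_mult_closed[OF \<phi>] in auto)

lemma core_conj_closed:
  assumes \<phi>: "\<phi> \<in> homs F G" and h: "h \<in> core \<phi>" and f: "f \<in> carrier F"
  shows "\<phi> f \<otimes>\<^bsub>G\<^esub> h \<otimes>\<^bsub>G\<^esub> inv\<^bsub>G\<^esub> (\<phi> f) \<in> core \<phi>"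
proof -
  interpret A: group_hom F G \<phi> by (rule homs_group_hom[OF \<phi>])
  have hc: "h \<in> carrier G" using core_carrier[OF \<phi> h] .
  have pf: "\<phi> f \<in> carrier G" using f by simp
  show ?thesis unfolding mem_core_iff[OF \<phi>]
  proof (intro conjI ballI)
    fix f' assume f': "f' \<in> carrier F"
    have "\<phi> (f' \<otimes>\<^bsub>F\<^esub> f) \<otimes>\<^bsub>G\<^esub> h \<otimes>\<^bsub>G\<^esub> inv\<^bsub>G\<^esub> (\<phi> (f' \<otimes>\<^bsub>F\<^esub> f)) \<in> H"
      by (rule core_conj_mem[OF \<phi> h]) (simp add: f f')
    then show "\<phi> f' \<otimes>\<^bsub>G\<^esub> (\<phi> f \<otimes>\<^bsub>G\<^esub> h \<otimes>\<^bsub>G\<^esub> inv\<^bsub>G\<^esub> (\<phi> f)) \<otimes>\<^bsub>G\<^esub> inv\<^bsub>G\<^esub> (\<phi> f') \<in> H"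
      using f f' hc by (simp add: G.m_assoc G.inv_mult_group)
  next
    fix k assume k: "k \<in> deg0"
    define k' where "k' = inv\<^bsub>F\<^esub> f \<otimes>\<^bsub>F\<^esub> k \<otimes>\<^bsub>F\<^esub> f"
    have k': "k' \<in> deg0" unfolding k'_def by (rule deg0_conj_inv[OF f k])
    have kc: "k \<in> carrier F" "k' \<in> carrier F" using deg0_carrier k k' by auto
    have "\<phi> k = \<phi> f \<otimes>\<^bsub>G\<^esub> \<phi> k' \<otimes>\<^bsub>G\<^esub> inv\<^bsub>G\<^esub> (\<phi> f)"
      unfolding k'_def using f kc by (simp add: G.m_assoc)
    moreover have "h \<otimes>\<^bsub>G\<^esub> \<phi> k' = \<phi> k' \<otimes>\<^bsub>G\<^esub> h" by (rule core_commute_deg0[OF \<phi> h k'])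
    ultimately show "\<phi> f \<otimes>\<^bsub>G\<^esub> h \<otimes>\<^bsub>G\<^esub> inv\<^bsub>G\<^esub> (\<phi> f) \<otimes>\<^bsub>G\<^esub> \<phi> k
      = \<phi> k \<otimes>\<^bsub>G\<^esub> (\<phi> f \<otimes>\<^bsub>G\<^esub> h \<otimes>\<^bsub>G\<^esub> inv\<^bsub>G\<^esub> (\<phi> f))"
      using pf hc kc by (simp add: G.m_assoc) (simp add: G.m_assoc[symmetric])
  qed (use hc pf in simp)
qed

lemma core_conj_inv_closed:
  assumes \<phi>: "\<phi> \<in> homs F G" and h: "h \<in> core \<phi>" and f: "f \<in> carrier F"
  shows "inv\<^bsub>G\<^esub> (\<phi> f) \<otimes>\<^bsub>G\<^esub> h \<otimes>\<^bsub>G\<^esub> \<phi> f \<in> core \<phi>"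
proof -
  interpret A: group_hom F G \<phi> by (rule homs_group_hom[OF \<phi>])
  show ?thesis using core_conj_closed[OF \<phi> h F.inv_closed[OF f]] f by simp
qed

text \<open>
  Since \<phi>(t) normalizes the core, the twist by c changes \<phi>(f) = \<phi>(k) \<phi>(t)^n only by the
  core element \<phi>(t)^-n (\<phi>(t) c)^n.
\<close>

lemma twist_quotient_mem_core:
  assumes \<phi>: "\<phi> \<in> homs F G" and c: "c \<in> core \<phi>" and f: "f \<in> carrier F"
  shows "inv\<^bsub>G\<^esub> (\<phi> f) \<otimes>\<^bsub>G\<^esub> twist \<phi> c f \<in> core \<phi>"
proof -
  interpret A: group_hom F G \<phi> by (rule homs_group_hom[OF \<phi>])
  have cc: "c \<in> carrier G" using core_carrier[OF \<phi> c] .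
  have k: "deg0_part f \<in> carrier F" using deg0_part_carrier[OF f] .
  have pt: "\<phi> t \<in> carrier G" using t_carrier by simp
  have "\<phi> f = \<phi> (deg0_part f) \<otimes>\<^bsub>G\<^esub> \<phi> t [^]\<^bsub>G\<^esub> deg f"
    using deg0_part_mult_t_pow[OF f] k t_carrier by (metis A.hom_int_pow A.hom_mult F.int_pow_closed)
  moreover have "twist \<phi> c f = \<phi> (deg0_part f) \<otimes>\<^bsub>G\<^esub> (\<phi> t \<otimes>\<^bsub>G\<^esub> c) [^]\<^bsub>G\<^esub> deg f"
    using f by (simp add: twist_def extend_def)
  ultimately have "inv\<^bsub>G\<^esub> (\<phi> f) \<otimes>\<^bsub>G\<^esub> twist \<phi> c f
      = inv\<^bsub>G\<^esub> (\<phi> t [^]\<^bsub>G\<^esub> deg f) \<otimes>\<^bsub>G\<^esub> (\<phi> t \<otimes>\<^bsub>G\<^esub> c) [^]\<^bsub>G\<^esub> deg f"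
    using k pt cc by (simp add: G.m_assoc G.inv_mult_group)
  also have "\<dots> \<in> core \<phi>"
    by (rule G.int_pow_mult_normalized_mem[OF core_subgroup[OF \<phi>] pt
          core_conj_closed[OF \<phi> _ t_carrier] core_conj_inv_closed[OF \<phi> _ t_carrier] c])
  finally show ?thesis .
qed

lemma core_mono:
  assumes \<phi>: "\<phi> \<in> homs F G" and \<psi>: "\<psi> \<in> homs F G"
    and agree: "\<And>k. k \<in> deg0 \<Longrightarrow> \<psi> k = \<phi> k"
    and quotient: "\<And>f. f \<in> carrier F \<Longrightarrow> inv\<^bsub>G\<^esub> (\<phi> f) \<otimes>\<^bsub>G\<^esub> \<psi> f \<in> core \<phi>"
  shows "core \<phi> \<subseteq> core \<psi>"
proof
  interpret A: group_hom F G \<phi> by (rule homs_group_hom[OF \<phi>])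
  have S: "subgroup (core \<phi>) G" by (rule core_subgroup[OF \<phi>])
  fix h assume h: "h \<in> core \<phi>"
  have hc: "h \<in> carrier G" using core_carrier[OF \<phi> h] .
  show "h \<in> core \<psi>" unfolding mem_core_iff[OF \<psi>]
  proof (intro conjI ballI)
    fix f assume f: "f \<in> carrier F"
    define s where "s = inv\<^bsub>G\<^esub> (\<phi> f) \<otimes>\<^bsub>G\<^esub> \<psi> f"
    have sS: "s \<in> core \<phi>" unfolding s_def by (rule quotient[OF f])
    have sc: "s \<in> carrier G" using core_carrier[OF \<phi> sS] .
    have \<psi>f: "\<psi> f = \<phi> f \<otimes>\<^bsub>G\<^esub> s"
      unfolding s_def using f group_hom.hom_closed[OF homs_group_hom[OF \<psi>]]
      by (simp add: G.m_assoc[symmetric])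
    have "s \<otimes>\<^bsub>G\<^esub> h \<otimes>\<^bsub>G\<^esub> inv\<^bsub>G\<^esub> s \<in> core \<phi>"
      using subgroup.m_closed[OF S subgroup.m_closed[OF S sS h] subgroup.m_inv_closed[OF S sS]] .
    then have "\<phi> f \<otimes>\<^bsub>G\<^esub> (s \<otimes>\<^bsub>G\<^esub> h \<otimes>\<^bsub>G\<^esub> inv\<^bsub>G\<^esub> s) \<otimes>\<^bsub>G\<^esub> inv\<^bsub>G\<^esub> (\<phi> f) \<in> H"
      using core_conj_mem[OF \<phi> _ f] by blast
    then show "\<psi> f \<otimes>\<^bsub>G\<^esub> h \<otimes>\<^bsub>G\<^esub> inv\<^bsub>G\<^esub> (\<psi> f) \<in> H"
      unfolding \<psi>f using f sc hc by (simp add: G.m_assoc G.inv_mult_group)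
  next
    fix k assume k: "k \<in> deg0"
    show "h \<otimes>\<^bsub>G\<^esub> \<psi> k = \<psi> k \<otimes>\<^bsub>G\<^esub> h" using agree[OF k] core_commute_deg0[OF \<phi> h k] by simp
  qed (rule hc)
qed

lemma core_twist:
  assumes \<phi>: "\<phi> \<in> homs F G" and c: "c \<in> core \<phi>"
  shows "core (twist \<phi> c) = core \<phi>"
proof
  have cz: "centralizes_deg0 \<phi> c" by (rule core_centralizes_deg0[OF \<phi> c])
  have \<theta>: "twist \<phi> c \<in> homs F G" by (rule twist_homs[OF \<phi> cz])
  show sub: "core \<phi> \<subseteq> core (twist \<phi> c)"
    by (rule core_mono[OF \<phi> \<theta> twist_deg0[OF \<phi> cz] twist_quotient_mem_core[OF \<phi> c]])
  have ic: "inv\<^bsub>G\<^esub> c \<in> core (twist \<phi> c)"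
    using subgroup.m_inv_closed[OF core_subgroup[OF \<phi>] c] sub by blast
  have icz: "centralizes_deg0 (twist \<phi> c) (inv\<^bsub>G\<^esub> c)" by (rule core_centralizes_deg0[OF \<theta> ic])
  have undo: "twist (twist \<phi> c) (inv\<^bsub>G\<^esub> c) = \<phi>"
    using twist_twist[OF \<phi> cz core_centralizes_deg0[OF \<phi> subgroup.m_inv_closed[OF core_subgroup[OF \<phi>] c]]]
      twist_one[OF \<phi>] core_carrier[OF \<phi> c] by simp
  have "core (twist \<phi> c) \<subseteq> core (twist (twist \<phi> c) (inv\<^bsub>G\<^esub> c))"
    by (rule core_mono[OF \<theta> twist_homs[OF \<theta> icz] twist_deg0[OF \<theta> icz] twist_quotient_mem_core[OF \<theta> ic]])
  then show "core (twist \<phi> c) \<subseteq> core \<phi>" unfolding undo .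
qed

lemma conj_mem_core_conj_hom:
  assumes \<phi>: "\<phi> \<in> homs F G" and h: "h \<in> H" and y: "y \<in> core \<phi>"
  shows "inv\<^bsub>G\<^esub> h \<otimes>\<^bsub>G\<^esub> y \<otimes>\<^bsub>G\<^esub> h \<in> core (conj_hom h \<phi>)"
proof -
  interpret A: group_hom F G \<phi> by (rule homs_group_hom[OF \<phi>])
  have hc: "h \<in> carrier G" using H_carrier[OF h] .
  have yc: "y \<in> carrier G" using core_carrier[OF \<phi> y] .
  show ?thesis unfolding mem_core_iff[OF conj_hom_homs[OF \<phi> hc]]
  proof (intro conjI ballI)
    fix f assume f: "f \<in> carrier F"
    have "inv\<^bsub>G\<^esub> h \<otimes>\<^bsub>G\<^esub> (\<phi> f \<otimes>\<^bsub>G\<^esub> y \<otimes>\<^bsub>G\<^esub> inv\<^bsub>G\<^esub> (\<phi> f)) \<otimes>\<^bsub>G\<^esub> h \<in> H"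
      using H_subgroup core_conj_mem[OF \<phi> y f] h
      by (meson subgroup.m_closed subgroup.m_inv_closed)
    then show "conj_hom h \<phi> f \<otimes>\<^bsub>G\<^esub> (inv\<^bsub>G\<^esub> h \<otimes>\<^bsub>G\<^esub> y \<otimes>\<^bsub>G\<^esub> h) \<otimes>\<^bsub>G\<^esub> inv\<^bsub>G\<^esub> (conj_hom h \<phi> f) \<in> H"
      using f hc yc by (simp add: conj_hom_def G.m_assoc G.inv_mult_group)
  next
    fix k assume k: "k \<in> deg0"
    have kc: "k \<in> carrier F" using deg0_carrier[OF k] .
    have "inv\<^bsub>G\<^esub> h \<otimes>\<^bsub>G\<^esub> y \<otimes>\<^bsub>G\<^esub> h \<otimes>\<^bsub>G\<^esub> conj_hom h \<phi> k = inv\<^bsub>G\<^esub> h \<otimes>\<^bsub>G\<^esub> (y \<otimes>\<^bsub>G\<^esub> \<phi> k) \<otimes>\<^bsub>G\<^esub> h"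
      using kc hc yc by (simp add: conj_hom_def G.m_assoc)
    also have "\<dots> = conj_hom h \<phi> k \<otimes>\<^bsub>G\<^esub> (inv\<^bsub>G\<^esub> h \<otimes>\<^bsub>G\<^esub> y \<otimes>\<^bsub>G\<^esub> h)"
      unfolding core_commute_deg0[OF \<phi> y k] using kc hc yc by (simp add: conj_hom_def G.m_assoc)
    finally show "inv\<^bsub>G\<^esub> h \<otimes>\<^bsub>G\<^esub> y \<otimes>\<^bsub>G\<^esub> h \<otimes>\<^bsub>G\<^esub> conj_hom h \<phi> k
      = conj_hom h \<phi> k \<otimes>\<^bsub>G\<^esub> (inv\<^bsub>G\<^esub> h \<otimes>\<^bsub>G\<^esub> y \<otimes>\<^bsub>G\<^esub> h)" .
  qed (use hc yc in simp)
qed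

lemma conj_mem_core_of_conj_hom:
  assumes \<phi>: "\<phi> \<in> homs F G" and h: "h \<in> H" and x: "x \<in> core (conj_hom h \<phi>)"
  shows "h \<otimes>\<^bsub>G\<^esub> x \<otimes>\<^bsub>G\<^esub> inv\<^bsub>G\<^esub> h \<in> core \<phi>"
proof -
  have hc: "h \<in> carrier G" using H_carrier[OF h] .
  have "inv\<^bsub>G\<^esub> (inv\<^bsub>G\<^esub> h) \<otimes>\<^bsub>G\<^esub> x \<otimes>\<^bsub>G\<^esub> inv\<^bsub>G\<^esub> h \<in> core (conj_hom (inv\<^bsub>G\<^esub> h) (conj_hom h \<phi>))"
    by (rule conj_mem_core_conj_hom[OF conj_hom_homs[OF \<phi> hc] subgroup.m_inv_closed[OF H_subgroup h] x])
  then show ?thesis using hc by (simp add: conj_hom_inv_conj_hom[OF \<phi> hc])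
qed

section \<open>Orbits\<close>

definition orbit :: "('f \<Rightarrow> 'g) \<Rightarrow> ('f \<Rightarrow> 'g) set" where
  "orbit \<phi> = {conj_hom h (twist \<phi> c) | h c. h \<in> H \<and> c \<in> core \<phi>}"

lemma twist_core_homs: "\<phi> \<in> homs F G \<Longrightarrow> c \<in> core \<phi> \<Longrightarrow> twist \<phi> c \<in> homs F G"
  by (rule twist_homs[OF _ core_centralizes_deg0])

lemma twist_core_twist_core:
  "\<phi> \<in> homs F G \<Longrightarrow> c \<in> core \<phi> \<Longrightarrow> d \<in> core \<phi> \<Longrightarrow> twist (twist \<phi> c) d = twist \<phi> (c \<otimes>\<^bsub>G\<^esub> d)"
  by (rule twist_twist[OF _ core_centralizes_deg0 core_centralizes_deg0])

lemma orbit_subset_homs: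
  assumes \<phi>: "\<phi> \<in> homs F G" shows "orbit \<phi> \<subseteq> homs F G"
  unfolding orbit_def using conj_hom_homs[OF twist_core_homs[OF \<phi>] H_carrier] by blast

lemma self_mem_orbit:
  assumes \<phi>: "\<phi> \<in> homs F G" shows "\<phi> \<in> orbit \<phi>"
proof -
  have "\<phi> = conj_hom \<one>\<^bsub>G\<^esub> (twist \<phi> \<one>\<^bsub>G\<^esub>)" using twist_one[OF \<phi>] conj_hom_one[OF \<phi>] by simp
  then show ?thesis
    unfolding orbit_def using subgroup.one_closed[OF H_subgroup] subgroup.one_closed[OF core_subgroup[OF \<phi>]]
    by blast
qed

lemma orbit_trans:
  assumes \<phi>: "\<phi> \<in> homs F G" and \<psi>: "\<psi> \<in> orbit \<phi>" and \<chi>: "\<chi> \<in> orbit \<psi>"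
  shows "\<chi> \<in> orbit \<phi>"
proof -
  obtain h c where h: "h \<in> H" and c: "c \<in> core \<phi>" and \<psi>_eq: "\<psi> = conj_hom h (twist \<phi> c)"
    using \<psi> unfolding orbit_def by blast
  obtain h' c' where h': "h' \<in> H" and c': "c' \<in> core \<psi>" and \<chi>_eq: "\<chi> = conj_hom h' (twist \<psi> c')"
    using \<chi> unfolding orbit_def by blast
  define \<theta> where "\<theta> = twist \<phi> c"
  have \<theta>: "\<theta> \<in> homs F G" unfolding \<theta>_def by (rule twist_core_homs[OF \<phi> c])
  have hc: "h \<in> carrier G" and hc': "h' \<in> carrier G" using H_carrier h h' by auto
  have c'c: "c' \<in> carrier G" using core_carrier[OF conj_hom_homs[OF \<theta> hc]] c' \<psi>_eq \<theta>_def by blast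
  define d where "d = h \<otimes>\<^bsub>G\<^esub> c' \<otimes>\<^bsub>G\<^esub> inv\<^bsub>G\<^esub> h"
  have d\<theta>: "d \<in> core \<theta>"
    unfolding d_def by (rule conj_mem_core_of_conj_hom[OF \<theta> h]) (use c' \<psi>_eq \<theta>_def in simp)
  have d: "d \<in> core \<phi>" using d\<theta> core_twist[OF \<phi> c] \<theta>_def by simp
  have "twist \<psi> c' = twist (conj_hom h \<theta>) (inv\<^bsub>G\<^esub> h \<otimes>\<^bsub>G\<^esub> d \<otimes>\<^bsub>G\<^esub> h)"
    unfolding \<psi>_eq \<theta>_def[symmetric] d_def using hc c'c by (simp add: G.m_assoc)
  also have "\<dots> = conj_hom h (twist \<theta> d)"
    by (rule conj_hom_twist[OF \<theta> hc core_centralizes_deg0[OF \<theta> d\<theta>], symmetric])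
  also have "twist \<theta> d = twist \<phi> (c \<otimes>\<^bsub>G\<^esub> d)"
    unfolding \<theta>_def by (rule twist_core_twist_core[OF \<phi> c d])
  finally have "\<chi> = conj_hom (h \<otimes>\<^bsub>G\<^esub> h') (twist \<phi> (c \<otimes>\<^bsub>G\<^esub> d))"
    using \<chi>_eq conj_hom_conj_hom[OF twist_core_homs[OF \<phi>] hc' hc]
      subgroup.m_closed[OF core_subgroup[OF \<phi>] c d] by simp
  then show ?thesis
    unfolding orbit_def using subgroup.m_closed[OF H_subgroup h h'] subgroup.m_closed[OF core_subgroup[OF \<phi>] c d]
    by blast
qed

lemma orbit_sym:
  assumes \<phi>: "\<phi> \<in> homs F G" and \<psi>: "\<psi> \<in> orbit \<phi>"
  shows "\<phi> \<in> orbit \<psi>"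
proof -
  obtain h c where h: "h \<in> H" and c: "c \<in> core \<phi>" and \<psi>_eq: "\<psi> = conj_hom h (twist \<phi> c)"
    using \<psi> unfolding orbit_def by blast
  define \<theta> where "\<theta> = twist \<phi> c"
  have \<theta>: "\<theta> \<in> homs F G" unfolding \<theta>_def by (rule twist_core_homs[OF \<phi> c])
  have hc: "h \<in> carrier G" using H_carrier[OF h] .
  have ic: "inv\<^bsub>G\<^esub> c \<in> core \<phi>" using subgroup.m_inv_closed[OF core_subgroup[OF \<phi>] c] .
  have ic\<theta>: "inv\<^bsub>G\<^esub> c \<in> core \<theta>" using ic core_twist[OF \<phi> c] \<theta>_def by simp
  define c' where "c' = inv\<^bsub>G\<^esub> h \<otimes>\<^bsub>G\<^esub> inv\<^bsub>G\<^esub> c \<otimes>\<^bsub>G\<^esub> h"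
  have c': "c' \<in> core \<psi>"
    unfolding c'_def \<psi>_eq \<theta>_def[symmetric] by (rule conj_mem_core_conj_hom[OF \<theta> h ic\<theta>])
  have "twist \<psi> c' = conj_hom h (twist \<theta> (inv\<^bsub>G\<^esub> c))"
    unfolding \<psi>_eq \<theta>_def[symmetric] c'_def
    by (rule conj_hom_twist[OF \<theta> hc core_centralizes_deg0[OF \<theta> ic\<theta>], symmetric])
  also have "twist \<theta> (inv\<^bsub>G\<^esub> c) = \<phi>"
    unfolding \<theta>_def using twist_core_twist_core[OF \<phi> c ic] twist_one[OF \<phi>] core_carrier[OF \<phi> c] by simp
  finally have "conj_hom (inv\<^bsub>G\<^esub> h) (twist \<psi> c') = \<phi>"
    using conj_hom_inv_conj_hom[OF \<phi> hc] by simp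
  then show ?thesis
    unfolding orbit_def using subgroup.m_inv_closed[OF H_subgroup h] c' by blast
qed

lemma orbit_eq: "\<phi> \<in> homs F G \<Longrightarrow> \<psi> \<in> orbit \<phi> \<Longrightarrow> orbit \<psi> = orbit \<phi>"
  by (meson orbit_sym orbit_trans orbit_subset_homs subset_iff subset_antisym)

text \<open>
  A conjugation by an element of H that is undone by a twist forces that element into the
  core: compare the two homomorphisms at f and use that both twists differ from \<phi> by core
  elements, which lie in H.
\<close>

lemma conj_hom_twist_eq_imp_inv_conj_mem:
  assumes \<phi>: "\<phi> \<in> homs F G" and e: "e \<in> H" and c: "c \<in> core \<phi>" and c': "c' \<in> core \<phi>"
    and eq: "conj_hom e (twist \<phi> c) = twist \<phi> c'" and f: "f \<in> carrier F"
  shows "inv\<^bsub>G\<^esub> (\<phi> f) \<otimes>\<^bsub>G\<^esub> inv\<^bsub>G\<^esub> e \<otimes>\<^bsub>G\<^esub> \<phi> f \<in> H"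
proof -
  interpret A: group_hom F G \<phi> by (rule homs_group_hom[OF \<phi>])
  define a where "a = inv\<^bsub>G\<^esub> (\<phi> f) \<otimes>\<^bsub>G\<^esub> twist \<phi> c f"
  define b where "b = inv\<^bsub>G\<^esub> (\<phi> f) \<otimes>\<^bsub>G\<^esub> twist \<phi> c' f"
  have a: "a \<in> core \<phi>" unfolding a_def by (rule twist_quotient_mem_core[OF \<phi> c f])
  have b: "b \<in> core \<phi>" unfolding b_def by (rule twist_quotient_mem_core[OF \<phi> c' f])
  have ac: "a \<in> carrier G" and bc: "b \<in> carrier G" using core_carrier[OF \<phi>] a b by auto
  have ec: "e \<in> carrier G" using H_carrier[OF e] .
  have pf: "\<phi> f \<in> carrier G" using f by simp
  have tw: "twist \<phi> c f = \<phi> f \<otimes>\<^bsub>G\<^esub> a" "twist \<phi> c' f = \<phi> f \<otimes>\<^bsub>G\<^esub> b"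
    unfolding a_def b_def using pf f twist_core_homs[OF \<phi> c] twist_core_homs[OF \<phi> c']
    by (simp_all add: G.m_assoc[symmetric] homs_def hom_def Pi_def)
  have conj_eq: "inv\<^bsub>G\<^esub> e \<otimes>\<^bsub>G\<^esub> (\<phi> f \<otimes>\<^bsub>G\<^esub> a) \<otimes>\<^bsub>G\<^esub> e = \<phi> f \<otimes>\<^bsub>G\<^esub> b"
    using fun_cong[OF eq, of f] f by (simp add: conj_hom_def tw)
  have "inv\<^bsub>G\<^esub> (\<phi> f) \<otimes>\<^bsub>G\<^esub> inv\<^bsub>G\<^esub> e \<otimes>\<^bsub>G\<^esub> \<phi> f
      = inv\<^bsub>G\<^esub> (\<phi> f) \<otimes>\<^bsub>G\<^esub> (inv\<^bsub>G\<^esub> e \<otimes>\<^bsub>G\<^esub> (\<phi> f \<otimes>\<^bsub>G\<^esub> a) \<otimes>\<^bsub>G\<^esub> e) \<otimes>\<^bsub>G\<^esub> inv\<^bsub>G\<^esub> e \<otimes>\<^bsub>G\<^esub> inv\<^bsub>G\<^esub> a"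
    using pf ec ac by (simp add: G.m_assoc)
  also have "\<dots> = b \<otimes>\<^bsub>G\<^esub> inv\<^bsub>G\<^esub> e \<otimes>\<^bsub>G\<^esub> inv\<^bsub>G\<^esub> a"
    unfolding conj_eq using pf bc ec ac by (simp add: G.m_assoc)
  also have "\<dots> \<in> H"
    using core_subset[OF \<phi>] a b e H_subgroup by (meson subsetD subgroup.m_closed subgroup.m_inv_closed)
  finally show ?thesis .
qed

lemma conj_hom_twist_eq_imp_mem_core:
  assumes \<phi>: "\<phi> \<in> homs F G" and e: "e \<in> H" and c: "c \<in> core \<phi>" and c': "c' \<in> core \<phi>"
    and eq: "conj_hom e (twist \<phi> c) = twist \<phi> c'"
  shows "e \<in> core \<phi>"
proof -
  interpret A: group_hom F G \<phi> by (rule homs_group_hom[OF \<phi>])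
  have ec: "e \<in> carrier G" using H_carrier[OF e] .
  show ?thesis unfolding mem_core_iff[OF \<phi>]
  proof (intro conjI ballI)
    fix f assume f: "f \<in> carrier F"
    have "\<phi> f \<otimes>\<^bsub>G\<^esub> inv\<^bsub>G\<^esub> e \<otimes>\<^bsub>G\<^esub> inv\<^bsub>G\<^esub> (\<phi> f) \<in> H"
      using conj_hom_twist_eq_imp_inv_conj_mem[OF \<phi> e c c' eq, of "inv\<^bsub>F\<^esub> f"] f by simp
    then have "inv\<^bsub>G\<^esub> (\<phi> f \<otimes>\<^bsub>G\<^esub> inv\<^bsub>G\<^esub> e \<otimes>\<^bsub>G\<^esub> inv\<^bsub>G\<^esub> (\<phi> f)) \<in> H"
      by (rule subgroup.m_inv_closed[OF H_subgroup])
    then show "\<phi> f \<otimes>\<^bsub>G\<^esub> e \<otimes>\<^bsub>G\<^esub> inv\<^bsub>G\<^esub> (\<phi> f) \<in> H"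
      using f ec by (simp add: G.inv_mult_group G.m_assoc)
  next
    fix k assume k: "k \<in> deg0"
    have kc: "k \<in> carrier F" using deg0_carrier[OF k] .
    have "inv\<^bsub>G\<^esub> e \<otimes>\<^bsub>G\<^esub> \<phi> k \<otimes>\<^bsub>G\<^esub> e = \<phi> k"
      using fun_cong[OF eq, of k] kc twist_deg0[OF \<phi> core_centralizes_deg0[OF \<phi> c] k]
        twist_deg0[OF \<phi> core_centralizes_deg0[OF \<phi> c'] k] by (simp add: conj_hom_def)
    then have "e \<otimes>\<^bsub>G\<^esub> (inv\<^bsub>G\<^esub> e \<otimes>\<^bsub>G\<^esub> \<phi> k \<otimes>\<^bsub>G\<^esub> e) = e \<otimes>\<^bsub>G\<^esub> \<phi> k" by simp
    then show "e \<otimes>\<^bsub>G\<^esub> \<phi> k = \<phi> k \<otimes>\<^bsub>G\<^esub> e" using ec kc by (simp add: G.m_assoc)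
  qed (rule ec)
qed

lemma conj_hom_core_eq_twist:
  assumes \<phi>: "\<phi> \<in> homs F G" and d: "d \<in> core \<phi>"
  obtains e where "e \<in> core \<phi>" "conj_hom d \<phi> = twist \<phi> e"
proof
  interpret A: group_hom F G \<phi> by (rule homs_group_hom[OF \<phi>])
  have dc: "d \<in> carrier G" using core_carrier[OF \<phi> d] .
  have pt: "\<phi> t \<in> carrier G" using t_carrier by simp
  define e where "e = inv\<^bsub>G\<^esub> (\<phi> t) \<otimes>\<^bsub>G\<^esub> inv\<^bsub>G\<^esub> d \<otimes>\<^bsub>G\<^esub> \<phi> t \<otimes>\<^bsub>G\<^esub> d"
  have inv_d: "inv\<^bsub>G\<^esub> d \<in> core \<phi>" using subgroup.m_inv_closed[OF core_subgroup[OF \<phi>] d] .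
  show e: "e \<in> core \<phi>" unfolding e_def
    using subgroup.m_closed[OF core_subgroup[OF \<phi>] core_conj_inv_closed[OF \<phi> inv_d t_carrier] d] .
  show "conj_hom d \<phi> = twist \<phi> e"
  proof (rule twist_unique[OF \<phi> core_centralizes_deg0[OF \<phi> e] conj_hom_homs[OF \<phi> dc]])
    fix k assume k: "k \<in> deg0"
    show "conj_hom d \<phi> k = \<phi> k"
      using deg0_carrier[OF k] dc unfolding conj_hom_def
      by (simp add: G.m_assoc core_commute_deg0[OF \<phi> d k, symmetric])
  next
    show "conj_hom d \<phi> t = \<phi> t \<otimes>\<^bsub>G\<^esub> e" unfolding conj_hom_def e_def using t_carrier pt dc by (simp add: G.m_assoc)
  qed
qed

lemma conj_hom_core_twist_eq_twist:
  assumes \<phi>: "\<phi> \<in> homs F G" and d: "d \<in> core \<phi>" and c: "c \<in> core \<phi>"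
  obtains c' where "c' \<in> core \<phi>" "conj_hom d (twist \<phi> c) = twist \<phi> c'"
proof -
  obtain e where e: "e \<in> core \<phi>" and conj_eq: "conj_hom d \<phi> = twist \<phi> e"
    using conj_hom_core_eq_twist[OF \<phi> d] .
  have dc: "d \<in> carrier G" using core_carrier[OF \<phi> d] .
  have dcd: "inv\<^bsub>G\<^esub> d \<otimes>\<^bsub>G\<^esub> c \<otimes>\<^bsub>G\<^esub> d \<in> core \<phi>"
    using core_subgroup[OF \<phi>] c d by (meson subgroup.m_closed subgroup.m_inv_closed)
  have "conj_hom d (twist \<phi> c) = twist (twist \<phi> e) (inv\<^bsub>G\<^esub> d \<otimes>\<^bsub>G\<^esub> c \<otimes>\<^bsub>G\<^esub> d)"
    unfolding conj_eq[symmetric] by (rule conj_hom_twist[OF \<phi> dc core_centralizes_deg0[OF \<phi> c]])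
  also have "\<dots> = twist \<phi> (e \<otimes>\<^bsub>G\<^esub> (inv\<^bsub>G\<^esub> d \<otimes>\<^bsub>G\<^esub> c \<otimes>\<^bsub>G\<^esub> d))"
    by (rule twist_core_twist_core[OF \<phi> e dcd])
  finally show ?thesis
    using that subgroup.m_closed[OF core_subgroup[OF \<phi>] e dcd] by blast
qed

definition coset_rep :: "('f \<Rightarrow> 'g) \<Rightarrow> 'g \<Rightarrow> 'g" where
  "coset_rep \<phi> h = (SOME r. r \<in> core \<phi> #>\<^bsub>G\<^esub> h)"

definition orbit_param :: "('f \<Rightarrow> 'g) \<Rightarrow> 'g \<Rightarrow> 'f \<Rightarrow> 'g" where
  "orbit_param \<phi> h = conj_hom (coset_rep \<phi> h) (twist \<phi> (h \<otimes>\<^bsub>G\<^esub> inv\<^bsub>G\<^esub> coset_rep \<phi> h))"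

lemma coset_rep:
  assumes \<phi>: "\<phi> \<in> homs F G" and h: "h \<in> H"
  shows "coset_rep \<phi> h \<in> H" "h \<otimes>\<^bsub>G\<^esub> inv\<^bsub>G\<^esub> coset_rep \<phi> h \<in> core \<phi>"
    "core \<phi> #>\<^bsub>G\<^esub> coset_rep \<phi> h = core \<phi> #>\<^bsub>G\<^esub> h"
proof -
  have S: "subgroup (core \<phi>) G" by (rule core_subgroup[OF \<phi>])
  have hc: "h \<in> carrier G" using H_carrier[OF h] .
  have "h \<in> core \<phi> #>\<^bsub>G\<^esub> h" by (rule G.rcos_self[OF hc S])
  then have r: "coset_rep \<phi> h \<in> core \<phi> #>\<^bsub>G\<^esub> h" unfolding coset_rep_def by (rule someI)
  then obtain s where s: "s \<in> core \<phi>" and r_eq: "coset_rep \<phi> h = s \<otimes>\<^bsub>G\<^esub> h"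
    unfolding r_coset_def by blast
  show "coset_rep \<phi> h \<in> H"
    unfolding r_eq using subgroup.m_closed[OF H_subgroup _ h] core_subset[OF \<phi>] s by blast
  show "h \<otimes>\<^bsub>G\<^esub> inv\<^bsub>G\<^esub> coset_rep \<phi> h \<in> core \<phi>"
    unfolding r_eq using subgroup.m_inv_closed[OF S s] hc core_carrier[OF \<phi> s]
    by (simp add: G.inv_mult_group G.m_assoc[symmetric])
  show "core \<phi> #>\<^bsub>G\<^esub> coset_rep \<phi> h = core \<phi> #>\<^bsub>G\<^esub> h"
    using G.repr_independence[OF r hc S] by simp
qed

lemma orbit_param_inj: assumes \<phi>: "\<phi> \<in> homs F G" shows "inj_on (orbit_param \<phi>) H"
proof
  fix h1 h2 assume h1: "h1 \<in> H" and h2: "h2 \<in> H" and eq: "orbit_param \<phi> h1 = orbit_param \<phi> h2"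
  define r1 r2 where "r1 = coset_rep \<phi> h1" and "r2 = coset_rep \<phi> h2"
  define c1 c2 where "c1 = h1 \<otimes>\<^bsub>G\<^esub> inv\<^bsub>G\<^esub> r1" and "c2 = h2 \<otimes>\<^bsub>G\<^esub> inv\<^bsub>G\<^esub> r2"
  have r1: "r1 \<in> H" and r2: "r2 \<in> H" and c1: "c1 \<in> core \<phi>" and c2: "c2 \<in> core \<phi>"
    unfolding r1_def r2_def c1_def c2_def using coset_rep[OF \<phi>] h1 h2 by auto
  have r1c: "r1 \<in> carrier G" and r2c: "r2 \<in> carrier G" using H_carrier r1 r2 by auto
  have \<theta>1: "twist \<phi> c1 \<in> homs F G" and \<theta>2: "twist \<phi> c2 \<in> homs F G"
    using twist_core_homs[OF \<phi>] c1 c2 by auto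
  have "conj_hom r1 (twist \<phi> c1) = conj_hom r2 (twist \<phi> c2)"
    using eq unfolding orbit_param_def r1_def r2_def c1_def c2_def .
  then have "conj_hom (r1 \<otimes>\<^bsub>G\<^esub> inv\<^bsub>G\<^esub> r2) (twist \<phi> c1) = twist \<phi> c2"
    using conj_hom_conj_hom[OF \<theta>1 _ r1c, of "inv\<^bsub>G\<^esub> r2"] conj_hom_inv_conj_hom[OF \<theta>2 r2c] r2c
    by simp
  moreover have "r1 \<otimes>\<^bsub>G\<^esub> inv\<^bsub>G\<^esub> r2 \<in> H"
    using r1 r2 H_subgroup by (meson subgroup.m_closed subgroup.m_inv_closed)
  ultimately have "r1 \<otimes>\<^bsub>G\<^esub> inv\<^bsub>G\<^esub> r2 \<in> core \<phi>"
    using conj_hom_twist_eq_imp_mem_core[OF \<phi> _ c1 c2] by blast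
  then have "core \<phi> #>\<^bsub>G\<^esub> r1 = core \<phi> #>\<^bsub>G\<^esub> r2"
    using subgroup.rcos_module[OF core_subgroup[OF \<phi>] G.is_group r2c r1c]
      G.repr_independence[OF _ r2c core_subgroup[OF \<phi>]] by blast
  then have "core \<phi> #>\<^bsub>G\<^esub> h1 = core \<phi> #>\<^bsub>G\<^esub> h2"
    using coset_rep(3)[OF \<phi>] h1 h2 unfolding r1_def r2_def by simp
  then have r_eq: "r1 = r2" unfolding r1_def r2_def coset_rep_def by simp
  then have "twist \<phi> c1 = twist \<phi> c2"
    using eq conj_hom_inv_conj_hom[OF \<theta>1 r1c] conj_hom_inv_conj_hom[OF \<theta>2 r1c]
    unfolding orbit_param_def r1_def r2_def c1_def c2_def by metis
  then have "\<phi> t \<otimes>\<^bsub>G\<^esub> c1 = \<phi> t \<otimes>\<^bsub>G\<^esub> c2"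
    using twist_t[OF \<phi> core_centralizes_deg0[OF \<phi> c1]] twist_t[OF \<phi> core_centralizes_deg0[OF \<phi> c2]] by metis
  then have "c1 = c2"
    using core_carrier[OF \<phi>] c1 c2 t_carrier group_hom.hom_closed[OF homs_group_hom[OF \<phi>]] by simp
  then show "h1 = h2"
    using r_eq H_carrier h1 h2 r1c unfolding c1_def c2_def by (metis G.inv_solve_right G.m_closed G.inv_closed)
qed

lemma orbit_param_image: assumes \<phi>: "\<phi> \<in> homs F G" shows "orbit_param \<phi> ` H = orbit \<phi>"
proof
  show "orbit_param \<phi> ` H \<subseteq> orbit \<phi>"
    unfolding orbit_param_def orbit_def using coset_rep(1,2)[OF \<phi>] by blast
next
  show "orbit \<phi> \<subseteq> orbit_param \<phi> ` H"
  proof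
    fix \<psi> assume "\<psi> \<in> orbit \<phi>"
    then obtain h c where h: "h \<in> H" and c: "c \<in> core \<phi>" and \<psi>_eq: "\<psi> = conj_hom h (twist \<phi> c)"
      unfolding orbit_def by blast
    define r where "r = coset_rep \<phi> h"
    define d where "d = h \<otimes>\<^bsub>G\<^esub> inv\<^bsub>G\<^esub> r"
    have r: "r \<in> H" and d: "d \<in> core \<phi>" unfolding r_def d_def using coset_rep[OF \<phi> h] by auto
    have rc: "r \<in> carrier G" and dc: "d \<in> carrier G" using H_carrier[OF r] core_carrier[OF \<phi> d] .
    have h_eq: "h = d \<otimes>\<^bsub>G\<^esub> r" unfolding d_def using H_carrier[OF h] rc by (simp add: G.m_assoc)
    obtain c' where c': "c' \<in> core \<phi>" and tw: "conj_hom d (twist \<phi> c) = twist \<phi> c'"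
      using conj_hom_core_twist_eq_twist[OF \<phi> d c] .
    have c'c: "c' \<in> carrier G" using core_carrier[OF \<phi> c'] .
    have "\<psi> = conj_hom r (conj_hom d (twist \<phi> c))"
      unfolding \<psi>_eq h_eq by (rule conj_hom_conj_hom[OF twist_core_homs[OF \<phi> c] rc dc, symmetric])
    then have \<psi>_eq': "\<psi> = conj_hom r (twist \<phi> c')" unfolding tw .
    define h' where "h' = c' \<otimes>\<^bsub>G\<^esub> r"
    have h': "h' \<in> H"
      unfolding h'_def using subgroup.m_closed[OF H_subgroup _ r] core_subset[OF \<phi>] c' by blast
    have "core \<phi> #>\<^bsub>G\<^esub> h' = core \<phi> #>\<^bsub>G\<^esub> r"
      unfolding h'_def
      using G.coset_mult_assoc[OF subgroup.subset[OF core_subgroup[OF \<phi>]] c'c rc]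
        G.coset_join2[OF c'c core_subgroup[OF \<phi>] c'] by simp
    then have "coset_rep \<phi> h' = r"
      using coset_rep(3)[OF \<phi> h] unfolding r_def coset_rep_def by simp
    then have "orbit_param \<phi> h' = \<psi>"
      unfolding orbit_param_def \<psi>_eq' h'_def using c'c rc by (simp add: G.m_assoc)
    then show "\<psi> \<in> orbit_param \<phi> ` H" using h' by blast
  qed
qed

lemma orbit_eqpoll: "\<phi> \<in> homs F G \<Longrightarrow> orbit \<phi> \<approx> H"
  using orbit_param_inj orbit_param_image eqpoll_sym inj_on_image_eqpoll_self by metis

end

theorem mainTheorem1:
  fixes F :: "('f,'m) monoid_scheme" and deg :: "'f \<Rightarrow> int"
    and G :: "('g,'n) monoid_scheme" and H :: "'g set" and \<Phi> :: "('f \<Rightarrow> 'g) set"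
  assumes "indexed_group F deg"
    and "group G"
    and "subgroup H G"
    and "\<Phi> \<subseteq> homs F G"
    and I: "\<And>h \<phi>. h \<in> H \<Longrightarrow> \<phi> \<in> \<Phi> \<Longrightarrow>
              (\<lambda>f\<in>carrier F. inv\<^bsub>G\<^esub> h \<otimes>\<^bsub>G\<^esub> \<phi> f \<otimes>\<^bsub>G\<^esub> h) \<in> \<Phi>"
    and II: "\<And>\<phi> h \<psi>. \<phi> \<in> \<Phi> \<Longrightarrow> h \<in> phi_core F deg G \<phi> H \<Longrightarrow> \<psi> \<in> homs F G \<Longrightarrow>
              (\<forall>f\<in>carrier F. deg f = 0 \<longrightarrow> \<psi> f = \<phi> f) \<Longrightarrow>
              (\<exists>f1\<in>carrier F. deg f1 = 1 \<and> \<psi> f1 = \<phi> f1 \<otimes>\<^bsub>G\<^esub> h) \<Longrightarrow> \<psi> \<in> \<Phi>"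
  shows "card_dvd H \<Phi>"
proof -
  obtain t where t: "t \<in> carrier F" "deg t = 1"
    using \<open>indexed_group F deg\<close> unfolding indexed_group_def by (metis UNIV_I imageE)
  interpret core_setting F G deg t H
    using assms(1-3) t unfolding indexed_group_def core_setting_def degree_split_def
      degree_split_axioms_def core_setting_axioms_def by blast
  have homs: "\<phi> \<in> homs F G" if "\<phi> \<in> \<Phi>" for \<phi> using that assms(4) by blast
  have "orbit \<phi> \<subseteq> \<Phi>" if \<phi>: "\<phi> \<in> \<Phi>" for \<phi>
  proof
    fix \<psi> assume "\<psi> \<in> orbit \<phi>"
    then obtain h c where h: "h \<in> H" and c: "c \<in> core \<phi>" and \<psi>: "\<psi> = conj_hom h (twist \<phi> c)"
      unfolding orbit_def by blast
    note cz = core_centralizes_deg0[OF homs[OF \<phi>] c]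
    have "twist \<phi> c \<in> \<Phi>"
      using II[OF \<phi> c[unfolded core_def] twist_homs[OF homs[OF \<phi>] cz]]
        twist_deg0[OF homs[OF \<phi>] cz] twist_t[OF homs[OF \<phi>] cz] t
      unfolding deg0_def by blast
    then show "\<psi> \<in> \<Phi>" unfolding \<psi> conj_hom_def by (rule I[OF h])
  qed
  then show ?thesis
    using card_dvd_if_partition[of \<Phi> orbit H] self_mem_orbit orbit_eq orbit_eqpoll homs by blast
qed

end
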